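(* Let $\mathcal{G}$ be an infinite connected graph with finite maximum degree $d_{\max}$, and let $H$ be its Hashimoto (non-backtracking) matrix, with $\rho\equiv\rho_{l^2}(H)$. Consider site percolation on $\mathcal{G}$ with open-vertex probability $p$. If $p<1/\rho$, then there exist a base $\rho'<1$ and a constant $C\ge d_{\max}(1-p\rho)^{-1}$ such that for every pair of vertices $u,v$ of $\mathcal{G}$, $$\tau_{u,v}\le C\,(\rho')^{d(u,v)},$$ where $d(u,v)$ is the graph distance.
   Context: For a graph $\mathcal{G}$ with vertex set $\mathcal{V}$ and edge set $\mathcal{E}$, let $\mathcal{A}(\mathcal{G})$ be the set of arcs (directed edges; each undirected edge gives two mutually reverse arcs). The Hashimoto matrix $H$ is indexed by $\mathcal{A}\times\mathcal{A}$, with $H_{a,b}=1$ iff the head of $a$ coincides with the tail of $b$ and $b$ is not the reverse of $a$, and $H_{a,b}=0$ otherwise (it is the adjacency matrix of the oriented line graph of $\mathcal{G}$). $\rho_{l^2}(H)$ denotes the spectral radius of $H$ viewed as an operator on $l^2(\mathcal{A})$, i.e. $\rho_{l^2}(H)=\lim_{m\to\infty}\|H^m\|_2^{1/m}$. In site percolation each vertex is independently open with probability $p$; $\mathcal{C}(v)$ is the connected component containing $v$ of the subgraph induced by open vertices ($\mathcal{C}(v)=\emptyset$ if $v$ is closed). The connectivity is $\tau_{u,v}=\mathbb{P}(u\in\mathcal{C}(v))$. *)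

theory Defs
  imports "HOL-Probability.Probability"
begin

text \<open>A graph on vertex type 'v is given by an adjacency relation E (assumed symmetric
and irreflexive in the theorem). The vertex set is UNIV.\<close>

definition nbrs :: "('v \<Rightarrow> 'v \<Rightarrow> bool) \<Rightarrow> 'v \<Rightarrow> 'v set" where
  "nbrs E x = {y. E x y}"

definition is_walk :: "('v \<Rightarrow> 'v \<Rightarrow> bool) \<Rightarrow> 'v list \<Rightarrow> bool" where
  "is_walk E xs \<longleftrightarrow> xs \<noteq> [] \<and> successively E xs"

definition graph_connected :: "('v \<Rightarrow> 'v \<Rightarrow> bool) \<Rightarrow> bool" where
  "graph_connected E \<longleftrightarrow> (\<forall>u v. \<exists>xs. is_walk E xs \<and> hd xs = u \<and> last xs = v)"

definition gdist :: "('v \<Rightarrow> 'v \<Rightarrow> bool) \<Rightarrow> 'v \<Rightarrow> 'v \<Rightarrow> nat" where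
  "gdist E u v = (LEAST n. \<exists>xs. is_walk E xs \<and> hd xs = u \<and> last xs = v \<and> length xs = Suc n)"

text \<open>Maximum degree (meaningful when degrees are bounded).\<close>
definition dmax :: "('v \<Rightarrow> 'v \<Rightarrow> bool) \<Rightarrow> nat" where
  "dmax E = Max ((\<lambda>x. card (nbrs E x)) ` UNIV)"

text \<open>Arcs and the Hashimoto (non-backtracking) operator acting on functions on arcs:
  (H f)(a) = sum over b with H_{a,b} = 1 of f(b).\<close>
definition arcs :: "('v \<Rightarrow> 'v \<Rightarrow> bool) \<Rightarrow> ('v \<times> 'v) set" where
  "arcs E = {(x, y). E x y}"

definition hash_apply :: "('v \<Rightarrow> 'v \<Rightarrow> bool) \<Rightarrow> ('v \<times> 'v \<Rightarrow> real) \<Rightarrow> ('v \<times> 'v \<Rightarrow> real)" where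
  "hash_apply E f a = (\<Sum>b\<in>{b \<in> arcs E. fst b = snd a \<and> snd b \<noteq> fst a}. f b)"

definition l2norm_arcs :: "('v \<Rightarrow> 'v \<Rightarrow> bool) \<Rightarrow> ('v \<times> 'v \<Rightarrow> real) \<Rightarrow> real" where
  "l2norm_arcs E f = sqrt (\<Sum>\<^sub>\<infinity>a\<in>arcs E. (f a)\<^sup>2)"

definition hash_pow_norm :: "('v \<Rightarrow> 'v \<Rightarrow> bool) \<Rightarrow> nat \<Rightarrow> real" where
  "hash_pow_norm E m = Sup {l2norm_arcs E ((hash_apply E ^^ m) f) | f.
       (\<lambda>a. (f a)\<^sup>2) summable_on arcs E \<and> l2norm_arcs E f \<le> 1}"

definition hash_rho :: "('v \<Rightarrow> 'v \<Rightarrow> bool) \<Rightarrow> real" where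
  "hash_rho E = lim (\<lambda>m. hash_pow_norm E m powr (1 / real m))"

text \<open>Site percolation: product Bernoulli(p) measure on configurations (True = open).\<close>
definition perc :: "real \<Rightarrow> ('v \<Rightarrow> bool) measure" where
  "perc p = PiM UNIV (\<lambda>_. measure_pmf (bernoulli_pmf p))"

definition in_cluster :: "('v \<Rightarrow> 'v \<Rightarrow> bool) \<Rightarrow> ('v \<Rightarrow> bool) \<Rightarrow> 'v \<Rightarrow> 'v \<Rightarrow> bool" where
  "in_cluster E \<omega> u v \<longleftrightarrow> (\<exists>xs. is_walk E xs \<and> hd xs = v \<and> last xs = u \<and> (\<forall>x\<in>set xs. \<omega> x))"

definition tau :: "('v \<Rightarrow> 'v \<Rightarrow> bool) \<Rightarrow> real \<Rightarrow> 'v \<Rightarrow> 'v \<Rightarrow> real" where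
  "tau E p u v = measure (perc p) {\<omega> \<in> space (perc p). in_cluster E \<omega> u v}"

end

theory Submission
  imports Defs
begin

text \<open>
  An open walk from v to u contains an open self-avoiding path, so tau u v is at most
  the sum over n of N_n p^(n+1), where N_n counts the self-avoiding paths of n steps from v
  to u; N_n vanishes for n < d(u,v). Self-avoiding paths are non-backtracking, so N_n is
  bounded by entries of H^(n-1) applied to the indicator of the arcs entering u, hence by
  D^(3/2) ||H^(n-1)|| for a degree bound D. The norms ||H^m|| are submultiplicative, so by Fekete's lemma
  ||H^m|| <= K t^m for every t > rho. Choosing rho < t < 1/p makes the series dominated by a
  geometric series of ratio p t < 1, whose tail from d(u,v) on gives the bound with
  rho' = p t.
\<close>

lemma product_prob_space_bernoulli:
  "product_prob_space (\<lambda>_. measure_pmf (bernoulli_pmf p))"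
  by (simp add: product_prob_space_def product_prob_space_axioms_def product_sigma_finite_def
      prob_space_measure_pmf prob_space_imp_sigma_finite)

lemma prob_space_perc: "prob_space (perc p)"
proof -
  interpret product_prob_space "\<lambda>_. measure_pmf (bernoulli_pmf p)" "UNIV :: 'v set"
    by (rule product_prob_space_bernoulli)
  show ?thesis unfolding perc_def by (rule P.prob_space_axioms)
qed

lemma perc_all_open:
  fixes X :: "'v set"
  assumes "finite X" "0 \<le> p" "p \<le> 1"
  shows "{\<omega>\<in>space (perc p). \<forall>x\<in>X. \<omega> x} \<in> sets (perc p)"
    and "measure (perc p) {\<omega>\<in>space (perc p). \<forall>x\<in>X. \<omega> x} = p ^ card X"
proof -
  interpret product_prob_space "\<lambda>_. measure_pmf (bernoulli_pmf p)" "UNIV :: 'v set"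
    by (rule product_prob_space_bernoulli)
  have cylinder: "{\<omega>\<in>space (perc p). \<forall>x\<in>X. \<omega> x} =
     prod_emb UNIV (\<lambda>_. measure_pmf (bernoulli_pmf p)) X (Pi\<^sub>E X (\<lambda>_. {True}))"
    by (auto simp: perc_def prod_emb_def space_PiM PiE_iff fun_eq_iff restrict_def split: if_splits)
  show "{\<omega>\<in>space (perc p). \<forall>x\<in>X. \<omega> x} \<in> sets (perc p)"
    unfolding cylinder unfolding perc_def
    by (intro measurable_prod_emb sets_PiM_I_finite) (auto simp: assms)
  have "emeasure (perc p) {\<omega>\<in>space (perc p). \<forall>x\<in>X. \<omega> x}
      = (\<Prod>i\<in>X. emeasure (measure_pmf (bernoulli_pmf p)) {True})"
    unfolding cylinder unfolding perc_def by (rule emeasure_PiM_emb) (auto simp: assms)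
  also have "\<dots> = ennreal (p ^ card X)"
    using assms by (simp add: emeasure_pmf_single ennreal_power)
  finally show "measure (perc p) {\<omega>\<in>space (perc p). \<forall>x\<in>X. \<omega> x} = p ^ card X"
    using assms by (simp add: measure_def)
qed

lemma is_walk_Cons2: "is_walk E (x # y # zs) \<longleftrightarrow> E x y \<and> is_walk E (y # zs)"
  by (simp add: is_walk_def)

lemma is_walk_rev:
  assumes "\<And>x y. E x y \<Longrightarrow> E y x" "is_walk E xs" shows "is_walk E (rev xs)"
  using assms unfolding is_walk_def by (auto simp: successively_rev elim: successively_mono)

lemma is_walk_distinct_shortcut:
  "is_walk E xs \<Longrightarrow>
     \<exists>ys. is_walk E ys \<and> distinct ys \<and> hd ys = hd xs \<and> last ys = last xs \<and> set ys \<subseteq> set xs"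
proof (induction xs rule: length_induct)
  case (1 xs)
  show ?case
  proof (cases "distinct xs")
    case True then show ?thesis using 1 by blast
  next
    case False
    then obtain as y bs cs where xs: "xs = as @ [y] @ bs @ [y] @ cs"
      using not_distinct_decomp by blast
    let ?ys = "as @ [y] @ cs"
    have "successively E (y # cs)" if "successively E (y # bs @ y # cs)"
      using that successively_append_iff[of E "y # bs" "y # cs"] by simp
    then have "is_walk E ?ys" using "1.prems" unfolding xs is_walk_def
      by (auto simp: successively_append_iff)
    moreover have "length ?ys < length xs" by (simp add: xs)
    ultimately obtain zs where
      "is_walk E zs \<and> distinct zs \<and> hd zs = hd ?ys \<and> last zs = last ?ys \<and> set zs \<subseteq> set ?ys"
      using "1.IH" by blast
    moreover have "hd ?ys = hd xs" "last ?ys = last xs" "set ?ys \<subseteq> set xs"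
      by (auto simp: xs hd_append)
    ultimately show ?thesis by auto
  qed
qed

definition paths :: "('v \<Rightarrow> 'v \<Rightarrow> bool) \<Rightarrow> 'v \<Rightarrow> 'v \<Rightarrow> nat \<Rightarrow> 'v list set" where
  "paths E x y n = {xs. is_walk E xs \<and> distinct xs \<and> hd xs = x \<and> last xs = y \<and> length xs = Suc n}"

lemma gdist_le_path_length:
  assumes "\<And>x y. E x y \<Longrightarrow> E y x" "xs \<in> paths E v u n" shows "gdist E u v \<le> n"
proof -
  have "is_walk E (rev xs) \<and> hd (rev xs) = u \<and> last (rev xs) = v \<and> length (rev xs) = Suc n"
    using assms is_walk_rev[OF assms(1)] by (auto simp: paths_def hd_rev last_rev)
  then show ?thesis unfolding gdist_def by (intro Least_le) blast
qed

lemma card_paths_0_le: "card (paths E v u 0) \<le> 1"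
proof -
  have "paths E v u 0 \<subseteq> {[v]}" by (auto simp: paths_def length_Suc_conv)
  then have "card (paths E v u 0) \<le> card {[v]}" by (rule card_mono[rotated]) simp
  then show ?thesis by simp
qed

fun non_backtracking :: "'v list \<Rightarrow> bool" where
  "non_backtracking (x # y # z # zs) \<longleftrightarrow> z \<noteq> x \<and> non_backtracking (y # z # zs)"
| "non_backtracking _ \<longleftrightarrow> True"

lemma distinct_non_backtracking: "distinct xs \<Longrightarrow> non_backtracking xs"
  by (induction xs rule: non_backtracking.induct) auto

definition walks_from :: "('v \<Rightarrow> 'v \<Rightarrow> bool) \<Rightarrow> 'v \<Rightarrow> nat \<Rightarrow> 'v list set" where
  "walks_from E v n = {xs. is_walk E xs \<and> hd xs = v \<and> length xs = Suc n}"

lemma tau_le_suminf_paths: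
  fixes E :: "'v \<Rightarrow> 'v \<Rightarrow> bool"
  assumes p: "0 \<le> p" "p \<le> 1" and fin: "\<And>n. finite (paths E v u n)"
    and summable: "summable (\<lambda>n. real (card (paths E v u n)) * p ^ Suc n)"
  shows "tau E p u v \<le> (\<Sum>n. real (card (paths E v u n)) * p ^ Suc n)"
proof -
  interpret prob_space "perc p" by (rule prob_space_perc)
  define A where "A X = {\<omega>\<in>space (perc p). \<forall>x\<in>X. \<omega> x}" for X :: "'v set"
  define B where "B n = (\<Union>xs\<in>paths E v u n. A (set xs))" for n
  have A: "A (set xs) \<in> events" "prob (A (set xs)) = p ^ Suc n" if "xs \<in> paths E v u n" for xs n
    using perc_all_open[OF _ p, of "set xs"] that by (auto simp: A_def paths_def distinct_card)
  have B: "B n \<in> events" for n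
    unfolding B_def by (rule sets.finite_UN[OF fin]) (use A in auto)
  have B_prob: "prob (B n) \<le> real (card (paths E v u n)) * p ^ Suc n" for n
  proof -
    have "prob (B n) \<le> (\<Sum>xs\<in>paths E v u n. prob (A (set xs)))"
      unfolding B_def by (rule finite_measure_subadditive_finite[OF fin]) (use A in auto)
    then show ?thesis using A(2) by simp
  qed
  have summable_B: "summable (\<lambda>n. prob (B n))"
    by (rule summable_comparison_test[OF _ summable]) (use B_prob in auto)
  have "{\<omega> \<in> space (perc p). in_cluster E \<omega> u v} \<subseteq> (\<Union>n. B n)"
  proof
    fix \<omega> assume "\<omega> \<in> {\<omega> \<in> space (perc p). in_cluster E \<omega> u v}"
    then obtain xs where \<omega>: "\<omega> \<in> space (perc p)"
      and xs: "is_walk E xs" "hd xs = v" "last xs = u" "\<forall>x\<in>set xs. \<omega> x"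
      by (auto simp: in_cluster_def)
    obtain ys where ys: "is_walk E ys" "distinct ys" "hd ys = v" "last ys = u" "set ys \<subseteq> set xs"
      using is_walk_distinct_shortcut[OF xs(1)] xs by auto
    then have "ys \<in> paths E v u (length ys - 1)"
      by (cases ys) (auto simp: paths_def is_walk_def)
    moreover have "\<omega> \<in> A (set ys)" using \<omega> xs(4) ys(5) by (auto simp: A_def)
    ultimately show "\<omega> \<in> (\<Union>n. B n)" by (auto simp: B_def)
  qed
  then have "tau E p u v \<le> prob (\<Union>n. B n)"
    unfolding tau_def by (rule finite_measure_mono) (use B in auto)
  also have "\<dots> \<le> (\<Sum>n. prob (B n))"
    by (rule finite_measure_subadditive_countably[OF _ summable_B]) (use B in auto)
  also have "\<dots> \<le> (\<Sum>n. real (card (paths E v u n)) * p ^ Suc n)"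
    by (rule suminf_le[OF B_prob summable_B summable])
  finally show ?thesis .
qed

definition submultiplicative :: "(nat \<Rightarrow> real) \<Rightarrow> bool" where
  "submultiplicative h \<longleftrightarrow> (\<forall>n. 0 \<le> h n) \<and> h 0 \<le> 1 \<and> (\<forall>m n. h (m + n) \<le> h m * h n)"

lemma submultiplicative_le_geometric:
  assumes h: "submultiplicative h" and k: "k \<ge> 1" and s: "s > 0"
    and hk: "h k powr (1 / real k) \<le> s"
  shows "\<exists>K>0. \<forall>n. h n \<le> K * s ^ n"
proof -
  have nn: "\<And>n. 0 \<le> h n" and h0: "h 0 \<le> 1" and sm: "\<And>m n. h (m + n) \<le> h m * h n"
    using h by (auto simp: submultiplicative_def)
  have "h k = (h k powr (1 / real k)) ^ k"
    using k nn[of k] by (cases "h k = 0") (simp_all add: powr_realpow[symmetric] powr_powr)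
  also have "\<dots> \<le> s ^ k" by (rule power_mono[OF hk]) simp
  finally have hks: "h k \<le> s ^ k" .
  define B where "B = max 1 (h 1)"
  have B: "B \<ge> 1" "h 1 \<le> B" by (auto simp: B_def)
  have hB: "h r \<le> B ^ r" for r
  proof (induction r)
    case (Suc r)
    have "h (Suc r) \<le> h 1 * h r" using sm[of 1 r] by simp
    also have "\<dots> \<le> B * B ^ r" by (rule mult_mono) (use B Suc nn in auto)
    finally show ?case by simp
  qed (use h0 in simp)
  have hq: "h (q * k + r) \<le> (s ^ k) ^ q * B ^ r" for q r
  proof (induction q)
    case (Suc q)
    have "h (Suc q * k + r) = h (k + (q * k + r))" by (simp add: algebra_simps)
    also have "\<dots> \<le> h k * h (q * k + r)" by (rule sm)
    also have "\<dots> \<le> s ^ k * ((s ^ k) ^ q * B ^ r)"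
      by (rule mult_mono) (use hks Suc nn s in auto)
    finally show ?case by (simp add: mult_ac)
  qed (use hB in simp)
  define M where "M = max 1 (B / s)"
  have M: "M \<ge> 1" "B / s \<le> M" by (auto simp: M_def)
  have "h n \<le> M ^ k * s ^ n" for n
  proof -
    define q r where "q = n div k" and "r = n mod k"
    have n: "n = q * k + r" by (simp add: q_def r_def)
    have rk: "r \<le> k" using k by (simp add: r_def less_imp_le)
    have "h n \<le> (s ^ k) ^ q * B ^ r" using hq n by simp
    also have "\<dots> = s ^ n * (B / s) ^ r"
      using s by (simp add: n power_add power_mult power_divide field_simps mult.commute)
    also have "\<dots> \<le> s ^ n * M ^ r"
      by (intro mult_left_mono power_mono) (use M s B in auto)
    also have "\<dots> \<le> s ^ n * M ^ k"
      by (intro mult_left_mono power_increasing) (use M s rk in auto)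
    finally show ?thesis by (simp add: mult.commute)
  qed
  moreover have "M ^ k > 0" using M by simp
  ultimately show ?thesis by blast
qed

lemma submultiplicative_root_tendsto_Inf:
  assumes h: "submultiplicative h"
  defines "L \<equiv> Inf {h k powr (1 / real k) | k. k \<ge> 1}"
  shows "(\<lambda>n. h n powr (1 / real n)) \<longlonglongrightarrow> L"
proof -
  let ?S = "{h k powr (1 / real k) | k. k \<ge> 1}"
  have nn: "\<And>n. 0 \<le> h n" using h by (simp add: submultiplicative_def)
  have ne: "?S \<noteq> {}" by auto
  have low: "L \<le> h n powr (1 / real n)" if "n \<ge> 1" for n
    unfolding L_def by (rule cInf_lower[OF _ bdd_belowI[of _ 0]]) (use that in auto)
  have L0: "L \<ge> 0" unfolding L_def by (rule cInf_greatest[OF ne]) auto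
  show ?thesis
  proof (rule order_tendstoI)
    fix y assume "y < L"
    show "\<forall>\<^sub>F n in sequentially. y < h n powr (1 / real n)"
      using eventually_ge_at_top[of 1]
    proof eventually_elim
      case (elim n) then show ?case using low[of n] \<open>y < L\<close> by linarith
    qed
  next
    fix y assume y: "L < y"
    define s where "s = (L + y) / 2"
    have s: "L < s" "s < y" "s > 0" using y L0 by (auto simp: s_def)
    obtain k where k: "k \<ge> 1" "h k powr (1 / real k) \<le> s"
      using cInf_lessD[OF ne, of s] s unfolding L_def by force
    obtain K where K: "K > 0" "\<And>n. h n \<le> K * s ^ n"
      using submultiplicative_le_geometric[OF h k(1) s(3) k(2)] by blast
    have "(\<lambda>n. K powr (1 / real n) * s) \<longlonglongrightarrow> K powr 0 * s"
      by (intro tendsto_intros lim_1_over_n) (use K in auto)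
    then have "\<forall>\<^sub>F n in sequentially. K powr (1 / real n) * s < y"
      using s K by (intro order_tendstoD(2)) auto
    then show "\<forall>\<^sub>F n in sequentially. h n powr (1 / real n) < y"
      using eventually_ge_at_top[of 1]
    proof eventually_elim
      case (elim n)
      have "h n powr (1 / real n) \<le> (K * s ^ n) powr (1 / real n)"
        by (rule powr_mono2) (use nn K elim in auto)
      also have "\<dots> = K powr (1 / real n) * s"
        using K s elim by (simp add: powr_mult powr_realpow[symmetric] powr_powr)
      finally show ?case using elim by simp
    qed
  qed
qed

lemma submultiplicative_geometric_bound:
  assumes h: "submultiplicative h" and t: "lim (\<lambda>n. h n powr (1 / real n)) < t"
  shows "\<exists>K>0. \<forall>n. h n \<le> K * t ^ n"
proof -
  let ?S = "{h k powr (1 / real k) | k. k \<ge> 1}"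
  have "lim (\<lambda>n. h n powr (1 / real n)) = Inf ?S"
    using submultiplicative_root_tendsto_Inf[OF h] by (rule limI)
  moreover have "Inf ?S \<ge> 0" by (rule cInf_greatest) auto
  ultimately have t_pos: "t > 0" and "Inf ?S < t" using t by auto
  then obtain k where "k \<ge> 1" "h k powr (1 / real k) \<le> t"
    using cInf_lessD[of ?S t] by force
  then show ?thesis using submultiplicative_le_geometric[OF h _ t_pos] by blast
qed

lemma exists_base_between:
  fixes p \<rho> :: real
  assumes p: "0 \<le> p" and p\<rho>: "p < 1 / \<rho>"
  shows "\<exists>t. \<rho> < t \<and> 0 < t \<and> p * t < 1"
proof -
  have \<rho>_pos: "0 < \<rho>" \<comment> \<open>as 1 / 0 = 0, the hypothesis also excludes \<rho> = 0\<close>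
  proof (rule ccontr)
    assume "\<not> 0 < \<rho>"
    then have "1 / \<rho> \<le> 0" by simp
    then show False using p p\<rho> by linarith
  qed
  then have "p * \<rho> < 1" using p\<rho> by (simp add: field_simps)
  define t where "t = \<rho> + (1 - p * \<rho>) / (p + 1)"
  have "0 < (1 - p * \<rho>) / (p + 1)" using \<open>p * \<rho> < 1\<close> p by simp
  then have "\<rho> < t" "0 < t" unfolding t_def using \<rho>_pos by linarith+
  moreover have "p * ((1 - p * \<rho>) / (p + 1)) < 1 - p * \<rho>"
    using \<open>p * \<rho> < 1\<close> p by (simp add: field_simps algebra_simps)
  then have "p * t < 1" by (simp add: t_def distrib_left)
  ultimately show ?thesis by blast
qed

lemma suminf_le_geometric_tail:
  fixes a :: "nat \<Rightarrow> real"
  assumes nonneg: "\<And>n. 0 \<le> a n" and below: "\<And>n. n < d \<Longrightarrow> a n = 0"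
    and above: "\<And>n. d \<le> n \<Longrightarrow> a n \<le> c * r ^ n" and r: "0 \<le> r" "r < 1"
  shows "summable a" and "suminf a \<le> c * r ^ d / (1 - r)"
proof -
  define b where "b n = (if d \<le> n then c * r ^ n else 0)" for n
  have "(\<lambda>i. c * r ^ d * r ^ i) sums (c * r ^ d * (1 / (1 - r)))"
    by (rule sums_mult[OF geometric_sums]) (use r in simp)
  moreover have "(\<lambda>i. b (i + d)) = (\<lambda>i. c * r ^ d * r ^ i)"
    by (auto simp: b_def power_add mult_ac)
  ultimately have "(\<lambda>i. b (i + d)) sums (c * r ^ d / (1 - r))" by simp
  then have b_sums: "b sums (c * r ^ d / (1 - r))"
    by (subst (asm) sums_zero_iff_shift) (auto simp: b_def)
  have a_le_b: "a n \<le> b n" for n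
    using below above by (cases "d \<le> n") (auto simp: b_def)
  show "summable a"
    by (rule summable_comparison_test[OF _ sums_summable[OF b_sums]]) (use a_le_b nonneg in auto)
  then show "suminf a \<le> c * r ^ d / (1 - r)"
    using suminf_le[OF a_le_b _ sums_summable[OF b_sums]] b_sums by (simp add: sums_iff)
qed

definition hash_succs :: "('v \<Rightarrow> 'v \<Rightarrow> bool) \<Rightarrow> 'v \<times> 'v \<Rightarrow> ('v \<times> 'v) set" where
  "hash_succs E a = {b \<in> arcs E. fst b = snd a \<and> snd b \<noteq> fst a}"

lemma hash_apply_eq_sum_succs: "hash_apply E f a = sum f (hash_succs E a)"
  by (simp add: hash_apply_def hash_succs_def)

lemma l2norm_arcs_nonneg: "0 \<le> l2norm_arcs E f"
  by (simp add: l2norm_arcs_def infsum_nonneg)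

lemma l2norm_arcs_scale: "l2norm_arcs E (\<lambda>a. c * f a) = \<bar>c\<bar> * l2norm_arcs E f"
proof -
  have "infsum (\<lambda>a. (c * f a)\<^sup>2) (arcs E) = c\<^sup>2 * infsum (\<lambda>a. (f a)\<^sup>2) (arcs E)"
    by (simp add: power_mult_distrib infsum_cmult_right')
  then show ?thesis by (simp add: l2norm_arcs_def real_sqrt_mult)
qed

lemma entry_le_l2norm_arcs:
  assumes "(\<lambda>a. (g a)\<^sup>2) summable_on arcs E" "a \<in> arcs E" shows "g a \<le> l2norm_arcs E g"
proof -
  have "(g a)\<^sup>2 \<le> infsum (\<lambda>a. (g a)\<^sup>2) (arcs E)"
    using finite_sum_le_infsum[OF assms(1), of "{a}"] assms(2) by simp
  then show ?thesis unfolding l2norm_arcs_def by (rule real_le_rsqrt)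
qed

lemma hash_pow_scale: "(hash_apply E ^^ m) (\<lambda>a. c * f a) = (\<lambda>a. c * (hash_apply E ^^ m) f a)"
  by (induction m) (simp_all add: hash_apply_def sum_distrib_left)

locale bounded_degree_graph =
  fixes E :: "'v \<Rightarrow> 'v \<Rightarrow> bool" and D :: nat
  assumes sym: "\<And>x y. E x y \<Longrightarrow> E y x" and finite_nbrs: "\<And>x. finite (nbrs E x)"
    and card_nbrs_le: "\<And>x. card (nbrs E x) \<le> D"
begin

abbreviation "H \<equiv> hash_apply E"
abbreviation "L2 f \<equiv> (\<lambda>a. (f a)\<^sup>2) summable_on arcs E"
abbreviation "nrm \<equiv> l2norm_arcs E"
abbreviation "h \<equiv> hash_pow_norm E"

lemma card_image_nbrs_le:
  assumes "S \<subseteq> g ` nbrs E x" shows "finite S" "card S \<le> D"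
proof -
  show "finite S" using assms finite_nbrs finite_subset by blast
  have "card S \<le> card (g ` nbrs E x)" by (rule card_mono) (use assms finite_nbrs in auto)
  also have "\<dots> \<le> card (nbrs E x)" by (rule card_image_le[OF finite_nbrs])
  finally show "card S \<le> D" using card_nbrs_le order_trans by blast
qed

lemma hash_succs_subset: "hash_succs E a \<subseteq> Pair (snd a) ` nbrs E (snd a)"
  by (auto simp: hash_succs_def arcs_def nbrs_def image_iff)

lemma hash_preds_subset: "{a \<in> arcs E. b \<in> hash_succs E a} \<subseteq> (\<lambda>w. (w, fst b)) ` nbrs E (fst b)"
  by (auto simp: hash_succs_def arcs_def nbrs_def image_iff intro: sym)

lemma finite_hash_succs: "finite (hash_succs E a)"
  and card_hash_succs_le: "card (hash_succs E a) \<le> D"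
  by (rule card_image_nbrs_le[OF hash_succs_subset])+

lemma card_hash_preds_le: "F \<subseteq> arcs E \<Longrightarrow> card {a \<in> F. b \<in> hash_succs E a} \<le> D"
  by (rule card_image_nbrs_le[of _ "\<lambda>w. (w, fst b)"]) (use hash_preds_subset[of b] in auto)

lemma hash_apply_square_le: "(H f a)\<^sup>2 \<le> real D * (\<Sum>b\<in>hash_succs E a. (f b)\<^sup>2)"
proof -
  have "(H f a)\<^sup>2 \<le> (\<Sum>b\<in>hash_succs E a. (f b)\<^sup>2) * card (hash_succs E a)"
    unfolding hash_apply_eq_sum_succs by (rule sum_squared_le_sum_of_squares)
  also have "\<dots> \<le> (\<Sum>b\<in>hash_succs E a. (f b)\<^sup>2) * real D"
    by (rule mult_left_mono) (use card_hash_succs_le in \<open>auto intro: sum_nonneg\<close>)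
  finally show ?thesis by (simp add: mult.commute)
qed

lemma hash_apply_finite_sum_le:
  assumes f: "L2 f" and F: "finite F" "F \<subseteq> arcs E"
  shows "(\<Sum>a\<in>F. (H f a)\<^sup>2) \<le> (real D)\<^sup>2 * infsum (\<lambda>a. (f a)\<^sup>2) (arcs E)"
proof -
  define G where "G = (\<Union>a\<in>F. hash_succs E a)"
  have G: "finite G" "G \<subseteq> arcs E"
    using F finite_hash_succs by (auto simp: G_def hash_succs_def)
  have "(\<Sum>a\<in>F. (H f a)\<^sup>2) \<le> (\<Sum>a\<in>F. real D * (\<Sum>b\<in>hash_succs E a. (f b)\<^sup>2))"
    by (rule sum_mono) (rule hash_apply_square_le)
  also have "\<dots> = real D * (\<Sum>a\<in>F. (\<Sum>b\<in>{b. b \<in> G \<and> b \<in> hash_succs E a}. (f b)\<^sup>2))"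
    by (simp add: sum_distrib_left G_def) (rule sum.cong; auto intro!: sum.cong)
  also have "\<dots> = real D * (\<Sum>b\<in>G. (\<Sum>a\<in>{a. a \<in> F \<and> b \<in> hash_succs E a}. (f b)\<^sup>2))"
    by (subst sum.swap_restrict) (use F G in auto)
  also have "\<dots> = real D * (\<Sum>b\<in>G. (f b)\<^sup>2 * card {a\<in>F. b \<in> hash_succs E a})"
    by (simp add: mult.commute)
  also have "\<dots> \<le> real D * (\<Sum>b\<in>G. (f b)\<^sup>2 * real D)"
    by (intro mult_left_mono sum_mono) (use card_hash_preds_le F in auto)
  also have "\<dots> = (real D)\<^sup>2 * (\<Sum>b\<in>G. (f b)\<^sup>2)"
    by (simp add: sum_distrib_left sum_distrib_right power2_eq_square mult_ac)
  also have "\<dots> \<le> (real D)\<^sup>2 * infsum (\<lambda>a. (f a)\<^sup>2) (arcs E)"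
    by (intro mult_left_mono finite_sum_le_infsum) (use f G in auto)
  finally show ?thesis .
qed

lemma hash_apply_l2:
  assumes f: "L2 f" shows "L2 (H f)" and "nrm (H f) \<le> real D * nrm f"
proof -
  show s: "L2 (H f)"
    by (rule nonneg_bdd_above_summable_on)
      (auto intro!: bdd_aboveI hash_apply_finite_sum_le[OF f])
  have "infsum (\<lambda>a. (H f a)\<^sup>2) (arcs E) \<le> (real D)\<^sup>2 * infsum (\<lambda>a. (f a)\<^sup>2) (arcs E)"
    by (rule infsum_le_finite_sums[OF s]) (rule hash_apply_finite_sum_le[OF f])
  then have "nrm (H f) \<le> sqrt ((real D)\<^sup>2 * infsum (\<lambda>a. (f a)\<^sup>2) (arcs E))"
    unfolding l2norm_arcs_def by simp
  then show "nrm (H f) \<le> real D * nrm f" by (simp add: l2norm_arcs_def real_sqrt_mult)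
qed

lemma hash_pow_l2:
  "L2 f \<Longrightarrow> L2 ((H ^^ m) f) \<and> nrm ((H ^^ m) f) \<le> real D ^ m * nrm f"
proof (induction m)
  case (Suc m)
  then have "L2 ((H ^^ m) f)" and IH: "nrm ((H ^^ m) f) \<le> real D ^ m * nrm f" by auto
  then have "nrm ((H ^^ Suc m) f) \<le> real D * nrm ((H ^^ m) f)" and "L2 ((H ^^ Suc m) f)"
    using hash_apply_l2 by auto
  moreover have "real D * nrm ((H ^^ m) f) \<le> real D * (real D ^ m * nrm f)"
    by (rule mult_left_mono[OF IH]) simp
  ultimately show ?case by simp
qed simp

lemma hash_pow_norm_set_bdd: "bdd_above {nrm ((H ^^ m) f) | f. L2 f \<and> nrm f \<le> 1}"
proof (rule bdd_aboveI)
  fix x assume "x \<in> {nrm ((H ^^ m) f) | f. L2 f \<and> nrm f \<le> 1}"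
  then obtain f where f: "L2 f" "nrm f \<le> 1" and x: "x = nrm ((H ^^ m) f)" by auto
  have "x \<le> real D ^ m * nrm f" using hash_pow_l2[OF f(1)] x by simp
  also have "\<dots> \<le> real D ^ m" using mult_left_mono[OF f(2), of "real D ^ m"] by simp
  finally show "x \<le> real D ^ m" .
qed

lemma hash_pow_norm_set_nonempty: "{nrm ((H ^^ m) f) | f. L2 f \<and> nrm f \<le> 1} \<noteq> {}"
proof -
  have "L2 (\<lambda>_. 0::real)" "nrm (\<lambda>_. 0::real) = 0" by (simp_all add: l2norm_arcs_def)
  then show ?thesis by fastforce
qed

lemma hash_pow_norm_upper: "L2 f \<Longrightarrow> nrm f \<le> 1 \<Longrightarrow> nrm ((H ^^ m) f) \<le> h m"
  unfolding hash_pow_norm_def by (rule cSup_upper[OF _ hash_pow_norm_set_bdd]) auto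

lemma hash_pow_norm_nonneg: "0 \<le> h m"
proof -
  have "nrm ((H ^^ m) (\<lambda>_. 0::real)) \<le> h m"
    by (rule hash_pow_norm_upper) (simp_all add: l2norm_arcs_def)
  then show ?thesis by (meson l2norm_arcs_nonneg order_trans)
qed

lemma hash_pow_norm_bound:
  assumes g: "L2 g" shows "nrm ((H ^^ m) g) \<le> h m * nrm g"
proof (cases "nrm g = 0")
  case True
  then show ?thesis using hash_pow_l2[OF g, of m] l2norm_arcs_nonneg[of E "(H ^^ m) g"] by simp
next
  case False
  define c where "c = nrm g"
  have c: "c > 0" using False l2norm_arcs_nonneg[of E g] by (simp add: c_def)
  have "L2 (\<lambda>a. (1/c) * g a)"
    unfolding power_mult_distrib by (rule summable_on_cmult_right[OF g])
  moreover have "nrm (\<lambda>a. (1/c) * g a) = \<bar>1/c\<bar> * nrm g" by (rule l2norm_arcs_scale)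
  then have "nrm (\<lambda>a. (1/c) * g a) \<le> 1" using c by (simp add: c_def)
  ultimately have "nrm ((H ^^ m) (\<lambda>a. (1/c) * g a)) \<le> h m" by (rule hash_pow_norm_upper)
  moreover have "nrm ((H ^^ m) (\<lambda>a. (1/c) * g a)) = \<bar>1/c\<bar> * nrm ((H ^^ m) g)"
    unfolding hash_pow_scale by (rule l2norm_arcs_scale)
  ultimately have "(1/c) * nrm ((H ^^ m) g) \<le> h m" using c by simp
  then show ?thesis using c by (simp add: c_def field_simps)
qed

lemma submultiplicative_hash_pow_norm: "submultiplicative h"
proof -
  have "h (m + n) \<le> h m * h n" for m n
    unfolding hash_pow_norm_def[of E "m+n"]
  proof (rule cSup_least[OF hash_pow_norm_set_nonempty])
    fix x assume "x \<in> {nrm ((H ^^ (m+n)) f) | f. L2 f \<and> nrm f \<le> 1}"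
    then obtain f where f: "L2 f" "nrm f \<le> 1" and x: "x = nrm ((H ^^ (m+n)) f)" by auto
    have "x = nrm ((H ^^ m) ((H ^^ n) f))" by (simp add: x funpow_add)
    also have "\<dots> \<le> h m * nrm ((H ^^ n) f)"
      by (rule hash_pow_norm_bound) (use hash_pow_l2[OF f(1)] in auto)
    also have "\<dots> \<le> h m * h n"
      by (rule mult_left_mono[OF hash_pow_norm_upper[OF f] hash_pow_norm_nonneg])
    finally show "x \<le> h m * h n" .
  qed
  moreover have "h 0 \<le> 1"
    unfolding hash_pow_norm_def by (rule cSup_least[OF hash_pow_norm_set_nonempty]) auto
  ultimately show ?thesis using hash_pow_norm_nonneg by (simp add: submultiplicative_def)
qed

lemma finite_walks_from: "finite (walks_from E v n)"
proof (induction n arbitrary: v)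
  case 0
  have "walks_from E v 0 \<subseteq> {[v]}" by (auto simp: walks_from_def length_Suc_conv)
  then show ?case using finite_subset by blast
next
  case (Suc n)
  have "walks_from E v (Suc n) \<subseteq> Cons v ` (\<Union>y\<in>nbrs E v. walks_from E y n)"
    by (force simp: walks_from_def length_Suc_conv is_walk_Cons2 nbrs_def)
  moreover have "finite (Cons v ` (\<Union>y\<in>nbrs E v. walks_from E y n))"
    using Suc finite_nbrs by auto
  ultimately show ?case using finite_subset by blast
qed

lemma finite_paths: "finite (paths E v u n)"
  by (rule finite_subset[OF _ finite_walks_from[of v n]]) (auto simp: paths_def walks_from_def)

abbreviation into_indicator :: "'v \<Rightarrow> 'v \<times> 'v \<Rightarrow> real" where
  "into_indicator u \<equiv> indicator {b. snd b = u}"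

definition nb_walks :: "'v \<Rightarrow> nat \<Rightarrow> 'v \<times> 'v \<Rightarrow> 'v list set" where
  "nb_walks u m a = {xs. is_walk E xs \<and> non_backtracking xs \<and> length xs = m + 2 \<and>
     hd xs = fst a \<and> hd (tl xs) = snd a \<and> last xs = u}"

lemma finite_nb_walks: "finite (nb_walks u m a)"
  by (rule finite_subset[OF _ finite_walks_from[of "fst a" "Suc m"]]) (auto simp: nb_walks_def walks_from_def)

lemma nb_walks_Suc_subset:
  "nb_walks u (Suc m) a \<subseteq> Cons (fst a) ` (\<Union>b\<in>hash_succs E a. nb_walks u m b)"
proof
  fix xs assume xs_walk: "xs \<in> nb_walks u (Suc m) a"
  then obtain y z zs where xs: "xs = fst a # y # z # zs"
    by (cases xs; cases "tl xs"; cases "tl (tl xs)"; auto simp: nb_walks_def)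
  have "(y, z) \<in> hash_succs E a" "y # z # zs \<in> nb_walks u m (y, z)"
    using xs_walk by (auto simp: xs nb_walks_def hash_succs_def arcs_def is_walk_Cons2)
  then show "xs \<in> Cons (fst a) ` (\<Union>b\<in>hash_succs E a. nb_walks u m b)"
    unfolding xs by blast
qed

lemma card_nb_walks_le:
  "real (card (nb_walks u m a)) \<le> (H ^^ m) (into_indicator u) a"
proof (induction m arbitrary: a)
  case 0
  have "nb_walks u 0 a \<subseteq> (if snd a = u then {[fst a, snd a]} else {})"
  proof
    fix xs assume "xs \<in> nb_walks u 0 a"
    then show "xs \<in> (if snd a = u then {[fst a, snd a]} else {})"
      by (cases xs; cases "tl xs"; auto simp: nb_walks_def)
  qed
  then have "card (nb_walks u 0 a) \<le> card (if snd a = u then {[fst a, snd a]} else {})"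
    by (rule card_mono[rotated]) simp
  then show ?case by (auto simp: indicator_def split: if_splits)
next
  case (Suc m)
  from nb_walks_Suc_subset[of u m a] have "card (nb_walks u (Suc m) a)
      \<le> card (Cons (fst a) ` (\<Union>b\<in>hash_succs E a. nb_walks u m b))"
    by (rule card_mono[rotated]) (use finite_hash_succs finite_nb_walks in auto)
  also have "\<dots> \<le> card (\<Union>b\<in>hash_succs E a. nb_walks u m b)"
    by (rule card_image_le) (use finite_hash_succs finite_nb_walks in auto)
  also have "\<dots> \<le> (\<Sum>b\<in>hash_succs E a. card (nb_walks u m b))"
    by (rule card_UN_le[OF finite_hash_succs])
  finally have "real (card (nb_walks u (Suc m) a))
      \<le> (\<Sum>b\<in>hash_succs E a. real (card (nb_walks u m b)))"
    by (metis of_nat_le_iff of_nat_sum)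
  also have "\<dots> \<le> (\<Sum>b\<in>hash_succs E a. (H ^^ m) (into_indicator u) b)"
    by (rule sum_mono) (rule Suc)
  also have "\<dots> = (H ^^ Suc m) (into_indicator u) a"
    by (simp add: hash_apply_eq_sum_succs)
  finally show ?case .
qed

lemma into_indicator_l2:
  "L2 (into_indicator u)" "nrm (into_indicator u) \<le> sqrt (real D)"
proof -
  let ?S = "{b \<in> arcs E. snd b = u}"
  have S: "finite ?S" "card ?S \<le> D"
    by (rule card_image_nbrs_le[of _ "\<lambda>w. (w, u)" u];
        auto simp: arcs_def nbrs_def image_iff intro: sym)+
  have "L2 (into_indicator u) \<longleftrightarrow> (\<lambda>_. 1::real) summable_on ?S"
    by (rule summable_on_cong_neutral) (auto simp: indicator_def)
  then show "L2 (into_indicator u)" using S by simp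
  have "infsum (\<lambda>a. (into_indicator u a)\<^sup>2) (arcs E) = infsum (\<lambda>_. 1) ?S"
    by (rule infsum_cong_neutral) (auto simp: indicator_def)
  then show "nrm (into_indicator u) \<le> sqrt (real D)"
    using S by (simp add: l2norm_arcs_def)
qed

lemma paths_subset_nb_walks:
  assumes n: "n \<ge> 1"
  shows "paths E v u n \<subseteq> (\<Union>y\<in>nbrs E v. nb_walks u (n - 1) (v, y))"
proof
  fix xs assume xs_path: "xs \<in> paths E v u n"
  then obtain x y zs where "xs = x # y # zs"
    using n by (cases xs; cases "tl xs"; auto simp: paths_def)
  then show "xs \<in> (\<Union>y\<in>nbrs E v. nb_walks u (n - 1) (v, y))"
    using xs_path n
    by (auto simp: paths_def nb_walks_def nbrs_def is_walk_Cons2 distinct_non_backtracking)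
qed

lemma card_paths_le_hash_pow_norm:
  assumes n: "n \<ge> 1"
  shows "real (card (paths E v u n)) \<le> real D * sqrt (real D) * h (n - 1)"
proof -
  from paths_subset_nb_walks[OF n]
  have "card (paths E v u n) \<le> card (\<Union>y\<in>nbrs E v. nb_walks u (n - 1) (v, y))"
    by (rule card_mono[rotated]) (use finite_nbrs finite_nb_walks in auto)
  also have "\<dots> \<le> (\<Sum>y\<in>nbrs E v. card (nb_walks u (n - 1) (v, y)))"
    by (rule card_UN_le[OF finite_nbrs])
  finally have "real (card (paths E v u n)) \<le> (\<Sum>y\<in>nbrs E v. real (card (nb_walks u (n - 1) (v, y))))"
    by (metis of_nat_le_iff of_nat_sum)
  also have "\<dots> \<le> (\<Sum>y\<in>nbrs E v. sqrt (real D) * h (n - 1))"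
  proof (rule sum_mono)
    fix y assume y: "y \<in> nbrs E v"
    have "real (card (nb_walks u (n - 1) (v, y))) \<le> (H ^^ (n - 1)) (into_indicator u) (v, y)"
      by (rule card_nb_walks_le)
    also have "\<dots> \<le> nrm ((H ^^ (n - 1)) (into_indicator u))"
      using hash_pow_l2[OF into_indicator_l2(1)] y
      by (intro entry_le_l2norm_arcs) (auto simp: arcs_def nbrs_def)
    also have "\<dots> \<le> h (n - 1) * nrm (into_indicator u)"
      by (rule hash_pow_norm_bound[OF into_indicator_l2(1)])
    also have "\<dots> \<le> h (n - 1) * sqrt (real D)"
      by (rule mult_left_mono[OF into_indicator_l2(2) hash_pow_norm_nonneg])
    finally show "real (card (nb_walks u (n - 1) (v, y))) \<le> sqrt (real D) * h (n - 1)"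
      by (simp add: mult.commute)
  qed
  also have "\<dots> = real (card (nbrs E v)) * (sqrt (real D) * h (n - 1))" by simp
  also have "\<dots> \<le> real D * (sqrt (real D) * h (n - 1))"
    by (rule mult_right_mono) (use card_nbrs_le hash_pow_norm_nonneg in auto)
  finally show ?thesis by (simp add: mult_ac)
qed

lemma card_paths_le_geometric:
  assumes t: "0 < t" and K: "\<And>n. h n \<le> K * t ^ n"
  shows "real (card (paths E v u n)) \<le> max 1 (real D * sqrt (real D) * K / t) * t ^ n"
proof (cases n)
  case 0
  then show ?thesis using card_paths_0_le[of E v u] by simp
next
  case (Suc m)
  have "real (card (paths E v u n)) \<le> real D * sqrt (real D) * h m"
    using card_paths_le_hash_pow_norm[of n] Suc by simp
  also have "\<dots> \<le> real D * sqrt (real D) * (K * t ^ m)" by (rule mult_left_mono[OF K]) simp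
  also have "\<dots> = real D * sqrt (real D) * K / t * t ^ n" using t by (simp add: Suc)
  also have "\<dots> \<le> max 1 (real D * sqrt (real D) * K / t) * t ^ n"
    by (rule mult_right_mono) (use t in auto)
  finally show ?thesis .
qed

lemma tau_le_geometric:
  assumes p: "0 \<le> p" "p \<le> 1" and t: "0 < t" "p * t < 1" and K: "\<And>n. h n \<le> K * t ^ n"
  defines "c \<equiv> max 1 (real D * sqrt (real D) * K / t)" \<comment> \<open>the 1 accounts for the path of length 0\<close>
  shows "tau E p u v \<le> c / (1 - p * t) * (p * t) ^ gdist E u v"
proof -
  define a where "a = (\<lambda>n. real (card (paths E v u n)) * p ^ Suc n)"
  have "a n \<le> c * (p * t) ^ n" for n
  proof -
    have "real (card (paths E v u n)) \<le> c * t ^ n"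
      unfolding c_def by (rule card_paths_le_geometric[OF t(1) K])
    then have "a n \<le> c * t ^ n * p ^ Suc n"
      unfolding a_def using p by (simp add: mult_right_mono)
    also have "\<dots> \<le> c * t ^ n * p ^ n"
      using p t by (intro mult_left_mono) (auto simp: c_def mult_left_le_one_le)
    finally show ?thesis by (simp add: power_mult_distrib mult_ac)
  qed
  moreover have "a n = 0" if "n < gdist E u v" for n
  proof -
    have "paths E v u n = {}"
      using gdist_le_path_length[of E, OF sym] that by (meson equals0I leD)
    then show ?thesis by (simp add: a_def)
  qed
  moreover have "0 \<le> a n" for n using p by (simp add: a_def)
  ultimately have "summable a" and a_le: "suminf a \<le> c * (p * t) ^ gdist E u v / (1 - p * t)"
    using suminf_le_geometric_tail[of a "gdist E u v" c "p * t"] p t by auto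
  then have "tau E p u v \<le> suminf a"
    unfolding a_def by (intro tau_le_suminf_paths[OF p finite_paths])
  also note a_le
  also have "c * (p * t) ^ gdist E u v / (1 - p * t) = c / (1 - p * t) * (p * t) ^ gdist E u v"
    by simp
  finally show ?thesis .
qed

end

theorem theorem2:
  fixes E :: "'v \<Rightarrow> 'v \<Rightarrow> bool" and p :: real
  assumes "infinite (UNIV :: 'v set)"
    and "\<forall>x y. E x y \<longrightarrow> E y x"
    and "\<forall>x. \<not> E x x"
    and "graph_connected E"
    and "\<exists>D::nat. \<forall>x. finite (nbrs E x) \<and> card (nbrs E x) \<le> D"
    and "0 \<le> p" and "p \<le> 1"
    and "p < 1 / hash_rho E"
  shows "\<exists>\<rho>' C. 0 \<le> \<rho>' \<and> \<rho>' < 1 \<and> C \<ge> real (dmax E) / (1 - p * hash_rho E) \<and>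
           (\<forall>u v. tau E p u v \<le> C * \<rho>' ^ gdist E u v)"
proof -
  obtain D where "\<forall>x. finite (nbrs E x) \<and> card (nbrs E x) \<le> D" using assms(5) by blast
  then interpret bounded_degree_graph E D using assms(2) by unfold_locales auto
  obtain t where t: "hash_rho E < t" "0 < t" "p * t < 1"
    using exists_base_between[OF assms(6,8)] by blast
  obtain K where K: "\<And>n. h n \<le> K * t ^ n"
    using submultiplicative_geometric_bound[OF submultiplicative_hash_pow_norm] t(1)
    unfolding hash_rho_def by blast
  define c where "c = max 1 (real D * sqrt (real D) * K / t) / (1 - p * t)"
  define C where "C = max (real (dmax E) / (1 - p * hash_rho E)) c"
  have "tau E p u v \<le> C * (p * t) ^ gdist E u v" for u v
  proof -
    have "tau E p u v \<le> c * (p * t) ^ gdist E u v"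
      unfolding c_def by (rule tau_le_geometric[OF assms(6,7) t(2,3) K])
    also have "\<dots> \<le> C * (p * t) ^ gdist E u v"
      by (rule mult_right_mono) (use assms(6) t in \<open>simp_all add: C_def\<close>)
    finally show ?thesis .
  qed
  moreover have "0 \<le> p * t" using assms(6) t by simp
  ultimately show ?thesis using t(3) by (intro exI[of _ "p * t"] exI[of _ C]) (simp add: C_def)
qed

end
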